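(* If $(S,K,I)$ is a split graph and $C$ is an induced cycle in the factor graph $\Phi(S)$, then $|C|\leq 4$.
   Context: A split graph $(S,K,I)$ is a graph $S$ together with a fixed partition $V(S)=K\dot\cup I$, where $K$ is a clique and $I$ is an independent set. For a vertex $v$ of $S$, $N_v$ denotes its open neighborhood in $S$ and $d_v=|N_v|$; $\eta_{uv}=|N_u\cap N_v|$. The factor graph $\Phi(S)$ is the loopless multigraph with vertex set $I$ in which, for distinct $u,v\in I$, there is one edge joining $u$ and $v$ for each 2-switch of $S$ acting on $u$ and $v$ (a 2-switch replaces edges $ab,cd$ with $ac,bd$ when $ab,cd\in E(S)$ and $ac,bd\notin E(S)$); equivalently, the multiplicity of $uv$ is $\sigma_{uv}=(d_u-\eta_{uv})(d_v-\eta_{uv})$, and $u,v$ are adjacent iff $\sigma_{uv}>0$. An induced cycle $C=v_1\ldots v_nv_1$ ($n\geq 3$) in $\Phi(S)$ consists of distinct vertices with $v_iv_{i+1}$ and $v_nv_1$ adjacent and no other pair adjacent (multiplicities ignored); $|C|=n$. *)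

theory Defs
  imports Main
begin

definition simple_graph :: "'a set \<Rightarrow> ('a \<Rightarrow> 'a \<Rightarrow> bool) \<Rightarrow> bool" where
  "simple_graph V E \<longleftrightarrow> finite V \<and> (\<forall>u v. E u v \<longrightarrow> u \<in> V \<and> v \<in> V)
     \<and> (\<forall>u v. E u v \<longrightarrow> E v u) \<and> (\<forall>u. \<not> E u u)"

definition split_graph :: "'a set \<Rightarrow> ('a \<Rightarrow> 'a \<Rightarrow> bool) \<Rightarrow> 'a set \<Rightarrow> 'a set \<Rightarrow> bool" where
  "split_graph V E K I \<longleftrightarrow> simple_graph V E \<and> K \<union> I = V \<and> K \<inter> I = {}
     \<and> (\<forall>u\<in>K. \<forall>v\<in>K. u \<noteq> v \<longrightarrow> E u v)
     \<and> (\<forall>u\<in>I. \<forall>v\<in>I. \<not> E u v)"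

definition nbhd :: "'a set \<Rightarrow> ('a \<Rightarrow> 'a \<Rightarrow> bool) \<Rightarrow> 'a \<Rightarrow> 'a set" where
  "nbhd V E v = {u \<in> V. E v u}"

definition deg :: "'a set \<Rightarrow> ('a \<Rightarrow> 'a \<Rightarrow> bool) \<Rightarrow> 'a \<Rightarrow> nat" where
  "deg V E v = card (nbhd V E v)"

definition eta :: "'a set \<Rightarrow> ('a \<Rightarrow> 'a \<Rightarrow> bool) \<Rightarrow> 'a \<Rightarrow> 'a \<Rightarrow> nat" where
  "eta V E u v = card (nbhd V E u \<inter> nbhd V E v)"

text \<open>Multiplicity of the edge uv of the factor graph: sigma_uv = (d_u - eta_uv)(d_v - eta_uv).\<close>
definition sigma :: "'a set \<Rightarrow> ('a \<Rightarrow> 'a \<Rightarrow> bool) \<Rightarrow> 'a \<Rightarrow> 'a \<Rightarrow> nat" where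
  "sigma V E u v = (deg V E u - eta V E u v) * (deg V E v - eta V E u v)"

definition factor_adj :: "'a set \<Rightarrow> ('a \<Rightarrow> 'a \<Rightarrow> bool) \<Rightarrow> 'a set \<Rightarrow> 'a \<Rightarrow> 'a \<Rightarrow> bool" where
  "factor_adj V E I u v \<longleftrightarrow> u \<in> I \<and> v \<in> I \<and> u \<noteq> v \<and> sigma V E u v > 0"

definition induced_cycle :: "'a set \<Rightarrow> ('a \<Rightarrow> 'a \<Rightarrow> bool) \<Rightarrow> 'a list \<Rightarrow> bool" where
  "induced_cycle W A cs \<longleftrightarrow> length cs \<ge> 3 \<and> distinct cs \<and> set cs \<subseteq> W
     \<and> (\<forall>i < length cs. \<forall>j < length cs. i \<noteq> j \<longrightarrow>
          (A (cs ! i) (cs ! j) \<longleftrightarrow> (j = Suc i mod length cs \<or> i = Suc j mod length cs)))"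

end

theory Submission
  imports Defs
begin

text \<open>Two vertices of \<open>I\<close> are adjacent in \<open>\<Phi>(S)\<close> exactly when their neighbourhoods are
  incomparable under inclusion. Along an induced cycle of length \<open>n \<ge> 5\<close> the neighbourhoods
  \<open>N\<^sub>0, N\<^sub>1, \<dots>\<close> are therefore incomparable at distance 1 and comparable at distances 2 and 3.
  If \<open>N\<^sub>0 \<subseteq> N\<^sub>2\<close>, these constraints force \<open>N\<^sub>i \<subseteq> N\<^sub>i\<^sub>+\<^sub>2\<close> and \<open>N\<^sub>i \<subseteq> N\<^sub>i\<^sub>+\<^sub>3\<close> for every \<open>i\<close>;
  going around the cycle in steps of two leads from \<open>N\<^sub>3\<close> back to \<open>N\<^sub>1\<close>, so
  \<open>N\<^sub>0 \<subseteq> N\<^sub>3 \<subseteq> N\<^sub>1\<close>, which contradicts incomparability. The case \<open>N\<^sub>2 \<subseteq> N\<^sub>0\<close> is the same argument for \<open>\<supseteq>\<close>.\<close>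

lemma card_diff_card_Int_pos_iff:
  assumes "finite A"
  shows "0 < card A - card (A \<inter> B) \<longleftrightarrow> \<not> A \<subseteq> B"
proof -
  have "card A - card (A \<inter> B) = card (A - B)"
    using assms by (simp add: card_Diff_subset_Int)
  also have "0 < card (A - B) \<longleftrightarrow> A - B \<noteq> {}"
    using assms by (simp add: card_gt_0_iff)
  finally show ?thesis by blast
qed

lemma sigma_pos_iff:
  assumes "finite V"
  shows "0 < sigma V E u v \<longleftrightarrow> \<not> nbhd V E u \<subseteq> nbhd V E v \<and> \<not> nbhd V E v \<subseteq> nbhd V E u"
proof -
  have "finite (nbhd V E w)" for w
    using assms unfolding nbhd_def by simp
  then show ?thesis
    unfolding sigma_def deg_def eta_def
    using card_diff_card_Int_pos_iff[of "nbhd V E u" "nbhd V E v"]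
      card_diff_card_Int_pos_iff[of "nbhd V E v" "nbhd V E u"]
    by (simp add: Int_commute)
qed

lemma factor_adj_iff_nbhd_incomparable:
  assumes "finite V" and "u \<in> I" and "v \<in> I"
  shows "factor_adj V E I u v \<longleftrightarrow> \<not> nbhd V E u \<subseteq> nbhd V E v \<and> \<not> nbhd V E v \<subseteq> nbhd V E u"
  using assms sigma_pos_iff[OF assms(1)] unfolding factor_adj_def by blast

lemma mod_add_left_inj:
  fixes i x y n :: nat
  assumes "x < n" and "y < n"
  shows "(i + x) mod n = (i + y) mod n \<longleftrightarrow> x = y"
proof
  assume eq: "(i + x) mod n = (i + y) mod n"
  show "x = y"
  proof (cases "y \<le> x")
    case True
    then have "n dvd x - y"
      using eq mod_eq_dvd_iff_nat[of "i + y" "i + x" n] by simp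
    then show ?thesis
      using True assms dvd_imp_le[of n "x - y"] by fastforce
  next
    case False
    then have "n dvd y - x"
      using eq mod_eq_dvd_iff_nat[of "i + x" "i + y" n] by simp
    then show ?thesis
      using False assms dvd_imp_le[of n "y - x"] by fastforce
  qed
qed simp

lemma induced_cycle_nth_mod_mem:
  assumes "induced_cycle W A cs"
  shows "cs ! (i mod length cs) \<in> W"
proof -
  have "i mod length cs < length cs"
    using assms unfolding induced_cycle_def by (simp del: length_greater_0_conv)
  then show ?thesis
    using assms nth_mem unfolding induced_cycle_def by blast
qed

lemma induced_cycle_adj_Suc:
  assumes "induced_cycle W A cs"
  shows "A (cs ! (i mod length cs)) (cs ! (Suc i mod length cs))"
proof -
  let ?n = "length cs"
  have n: "0 < ?n" "1 < ?n"
    using assms unfolding induced_cycle_def by (simp_all del: length_greater_0_conv)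
  have "i mod ?n \<noteq> Suc i mod ?n"
    using n mod_add_left_inj[of 0 ?n 1 i] by simp
  moreover have "Suc i mod ?n = Suc (i mod ?n) mod ?n"
    by (simp add: mod_Suc_eq)
  ultimately show ?thesis
    using assms n(1) unfolding induced_cycle_def by (metis mod_less_divisor)
qed

lemma induced_cycle_not_adj:
  assumes "induced_cycle W A cs" and "2 \<le> d" and "d + 2 \<le> length cs"
  shows "\<not> A (cs ! (i mod length cs)) (cs ! ((i + d) mod length cs))"
proof -
  let ?n = "length cs"
  let ?a = "i mod ?n" and ?b = "(i + d) mod ?n"
  have small: "0 < ?n" "1 < ?n" "d < ?n" "Suc d < ?n"
    using assms(2,3) by (simp_all del: length_greater_0_conv)
  have "?a \<noteq> ?b"
    using small assms(2) mod_add_left_inj[of 0 ?n d i] by simp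
  moreover have "?b \<noteq> Suc ?a mod ?n"
    using small assms(2) mod_add_left_inj[of d ?n 1 i] by (simp add: mod_Suc_eq)
  moreover have "?a \<noteq> Suc ?b mod ?n"
    using small mod_add_left_inj[of 0 ?n "Suc d" i] by (simp add: mod_Suc_eq)
  moreover have "?a < ?n" "?b < ?n"
    using small(1) by simp_all
  ultimately show ?thesis
    using assms(1) unfolding induced_cycle_def by blast
qed

lemma periodic_chain_contradiction:
  fixes R :: "'b \<Rightarrow> 'b \<Rightarrow> bool" and g :: "nat \<Rightarrow> 'b"
  assumes trans: "\<And>x y z. R x y \<Longrightarrow> R y z \<Longrightarrow> R x z"
    and periodic: "\<And>i. g (i + n) = g i" and "0 < n"
    and incomparable_1: "\<And>i. \<not> R (g i) (g (Suc i)) \<and> \<not> R (g (Suc i)) (g i)"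
    and comparable_2: "\<And>i. R (g i) (g (i + 2)) \<or> R (g (i + 2)) (g i)"
    and comparable_3: "\<And>i. R (g i) (g (i + 3)) \<or> R (g (i + 3)) (g i)"
    and start: "R (g 0) (g 2)"
  shows False
proof -
  have step_3: "R (g i) (g (i + 3))" if "R (g i) (g (i + 2))" for i
    using that comparable_3[of i] incomparable_1[of "i + 2"] trans
    by (metis add_Suc_right numeral_2_eq_2 numeral_3_eq_3)
  have step_2: "R (g i) (g (i + 2))" for i
  proof (induction i)
    case 0
    show ?case using start by (metis add_0)
  next
    case (Suc i)
    then have "R (g i) (g (Suc i + 2))"
      using step_3 by (simp add: numeral_3_eq_3 numeral_2_eq_2)
    then show ?case
      using comparable_2[of "Suc i"] incomparable_1[of i] trans by blast
  qed
  have steps_2: "R (g i) (g (i + 2 * Suc k))" for i k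
  proof (induction k)
    case (Suc k)
    then show ?case
      using step_2[of "i + 2 * Suc k"] trans by (simp add: add.assoc)
  qed (use step_2 in simp)
  have "3 + 2 * Suc (2 * n - 2) = 1 + n + n + n + n"
    using \<open>0 < n\<close> by simp
  then have "g (3 + 2 * Suc (2 * n - 2)) = g 1"
    by (simp only: periodic)
  then have "R (g 3) (g 1)"
    using steps_2[of 3 "2 * n - 2"] by simp
  then show False
    using step_3[of 0] step_2[of 0] incomparable_1[of 0] trans by simp
qed

lemma periodic_comparability_contradiction:
  fixes R :: "'b \<Rightarrow> 'b \<Rightarrow> bool" and g :: "nat \<Rightarrow> 'b"
  assumes "\<And>x y z. R x y \<Longrightarrow> R y z \<Longrightarrow> R x z"
    and "\<And>i. g (i + n) = g i" and "0 < n"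
    and "\<And>i. \<not> R (g i) (g (Suc i)) \<and> \<not> R (g (Suc i)) (g i)"
    and "\<And>i. R (g i) (g (i + 2)) \<or> R (g (i + 2)) (g i)"
    and "\<And>i. R (g i) (g (i + 3)) \<or> R (g (i + 3)) (g i)"
  shows False
proof (cases "R (g 0) (g 2)")
  case True
  show False
    by (rule periodic_chain_contradiction[of R g n]) (use assms True in \<open>auto\<close>)
next
  case False
  then have "R\<inverse>\<inverse> (g 0) (g 2)"
    using assms(5)[of 0] by (metis add_0 conversep_iff)
  show False
    by (rule periodic_chain_contradiction[of "R\<inverse>\<inverse>" g n])
      (use assms \<open>R\<inverse>\<inverse> (g 0) (g 2)\<close> in \<open>auto simp: disj_commute\<close>)
qed

theorem theorem3p3:
  fixes V :: "'a set" and E :: "'a \<Rightarrow> 'a \<Rightarrow> bool" and K I :: "'a set" and cs :: "'a list"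
  assumes "split_graph V E K I"
    and "induced_cycle I (factor_adj V E I) cs"
  shows "length cs \<le> 4"
proof (rule ccontr)
  assume long: "\<not> length cs \<le> 4"
  let ?n = "length cs"
  define N where "N i = nbhd V E (cs ! (i mod ?n))" for i
  have "finite V"
    using assms(1) unfolding split_graph_def simple_graph_def by blast
  then have adj_iff: "factor_adj V E I (cs ! (i mod ?n)) (cs ! (j mod ?n)) \<longleftrightarrow>
      \<not> N i \<subseteq> N j \<and> \<not> N j \<subseteq> N i" for i j
    unfolding N_def using factor_adj_iff_nbhd_incomparable induced_cycle_nth_mod_mem[OF assms(2)]
    by (metis mod_mod_trivial)
  have comparable: "N i \<subseteq> N (i + d) \<or> N (i + d) \<subseteq> N i" if "d \<in> {2, 3}" for i d
    using that long induced_cycle_not_adj[OF assms(2), of d i] adj_iff[of i "i + d"] by auto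
  show False
  proof (rule periodic_comparability_contradiction[of "(\<subseteq>)" N ?n])
    show "N (i + ?n) = N i" for i
      by (simp add: N_def)
    show "\<not> N i \<subseteq> N (Suc i) \<and> \<not> N (Suc i) \<subseteq> N i" for i
      using induced_cycle_adj_Suc[OF assms(2), of i] adj_iff[of i "Suc i"] by simp
    show "N i \<subseteq> N (i + 2) \<or> N (i + 2) \<subseteq> N i" for i
      using comparable[of 2 i] by simp
    show "N i \<subseteq> N (i + 3) \<or> N (i + 3) \<subseteq> N i" for i
      using comparable[of 3 i] by simp
  qed (use long in auto)
qed

end
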